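(* Let $d_1,d_2\ge 2$ and let $\rho$ be a density matrix on $\mathbb{C}^{d_1}\otimes\mathbb{C}^{d_2}$. Let $\mathcal{P}=\{P_j\}_{j=1}^{d_1^2}$ be a general SIC-POVM on $\mathbb{C}^{d_1}$ with parameter $a_1$ and $\mathcal{Q}=\{Q_k\}_{k=1}^{d_2^2}$ a general SIC-POVM on $\mathbb{C}^{d_2}$ with parameter $a_2$. Let $d=\min\{d_1^2,d_2^2\}$ and define $$J(\rho)=\max_{\sigma,\tau}\sum_{j=1}^{d}\mathrm{Tr}\big[(P_{\sigma(j)}\otimes Q_{\tau(j)})\rho\big],$$ where the maximum runs over all injective maps $\sigma:\{1,\dots,d\}\to\{1,\dots,d_1^2\}$ and $\tau:\{1,\dots,d\}\to\{1,\dots,d_2^2\}$. If $\rho$ is separable, then $$J(\rho)\le \frac12\left[\frac{a_1d_1^2+1}{d_1(d_1+1)}+\frac{a_2d_2^2+1}{d_2(d_2+1)}\right].$$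
   Context: A general SIC-POVM on $\mathbb{C}^{n}$ with parameter $a$ is a set of $n^2$ positive semidefinite operators $\{P_\alpha\}_{\alpha=1}^{n^2}$ on $\mathbb{C}^{n}$ such that $\sum_{\alpha=1}^{n^2}P_\alpha=I$, $\mathrm{Tr}(P_\alpha^2)=a$ for all $\alpha$, and $\mathrm{Tr}(P_\alpha P_\beta)=\frac{1-na}{n(n^2-1)}$ for all $\alpha\neq\beta$; here $\frac{1}{n^3}<a\le\frac{1}{n^2}$. A density matrix on $\mathbb{C}^{d_1}\otimes\mathbb{C}^{d_2}$ is separable if it is a convex combination of product states $\rho_A\otimes\rho_B$. *)

theory Defs
  imports "HOL-Analysis.Analysis"
begin

text \<open>Square complex matrices indexed by a finite type 'n (so they act on C^CARD('n)).\<close>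

definition mtrace :: "complex^'n::finite^'n \<Rightarrow> complex" where
  "mtrace A = (\<Sum>i\<in>UNIV. A $ i $ i)"

definition adjoint :: "complex^'n^'n \<Rightarrow> complex^'n^'n" where
  "adjoint A = (\<chi> i j. cnj (A $ j $ i))"

definition hermitian :: "complex^'n^'n \<Rightarrow> bool" where
  "hermitian A \<longleftrightarrow> adjoint A = A"

definition psd :: "complex^'n::finite^'n \<Rightarrow> bool" where
  "psd A \<longleftrightarrow> hermitian A \<and>
     (\<forall>v :: complex^'n. 0 \<le> Re (\<Sum>i\<in>UNIV. cnj (v $ i) * (A *v v) $ i))"

definition density :: "complex^'n::finite^'n \<Rightarrow> bool" where
  "density A \<longleftrightarrow> psd A \<and> mtrace A = 1"

text \<open>Kronecker (tensor) product; C^d1 (x) C^d2 is indexed by pairs.\<close>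
definition kron :: "complex^'a^'a \<Rightarrow> complex^'b^'b \<Rightarrow> complex^('a \<times> 'b)^('a \<times> 'b)" where
  "kron A B = (\<chi> r c. A $ fst r $ fst c * B $ snd r $ snd c)"

definition separable :: "complex^('a::finite \<times> 'b::finite)^('a \<times> 'b) \<Rightarrow> bool" where
  "separable \<rho> \<longleftrightarrow> (\<exists>(m::nat) (p::nat \<Rightarrow> real) (A :: nat \<Rightarrow> complex^'a^'a) (B :: nat \<Rightarrow> complex^'b^'b).
      (\<forall>i<m. 0 \<le> p i \<and> density (A i) \<and> density (B i)) \<and>
      (\<Sum>i<m. p i) = 1 \<and>
      \<rho> = (\<Sum>i<m. of_real (p i) *s kron (A i) (B i)))"

text \<open>General SIC-POVM on C^n, n = CARD('n), with parameter a; elements indexed by 0..<n^2.\<close>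
definition general_sic_povm :: "(nat \<Rightarrow> complex^'n::finite^'n) \<Rightarrow> real \<Rightarrow> bool" where
  "general_sic_povm P a \<longleftrightarrow>
     (let n = CARD('n) in
       1 / real n ^ 3 < a \<and> a \<le> 1 / real n ^ 2 \<and>
       (\<forall>\<alpha><n^2. psd (P \<alpha>)) \<and>
       (\<Sum>\<alpha><n^2. P \<alpha>) = mat 1 \<and>
       (\<forall>\<alpha><n^2. mtrace (P \<alpha> ** P \<alpha>) = of_real a) \<and>
       (\<forall>\<alpha><n^2. \<forall>\<beta><n^2. \<alpha> \<noteq> \<beta> \<longrightarrow>
          mtrace (P \<alpha> ** P \<beta>) = of_real ((1 - real n * a) / (real n * (real n ^ 2 - 1)))))"

text \<open>J(rho): maximum over injective sigma: {0..<d} -> {0..<d1^2}, tau: {0..<d} -> {0..<d2^2},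
  d = min d1^2 d2^2. The trace is real for psd arguments; we take its real part.\<close>
definition J_val :: "(nat \<Rightarrow> complex^'a::finite^'a) \<Rightarrow> (nat \<Rightarrow> complex^'b::finite^'b) \<Rightarrow> complex^('a \<times> 'b)^('a \<times> 'b) \<Rightarrow> real" where
  "J_val P Q \<rho> = (let d1 = CARD('a); d2 = CARD('b); d = min (d1^2) (d2^2) in
     Max {Re (\<Sum>j<d. mtrace (kron (P (\<sigma> j)) (Q (\<tau> j)) ** \<rho>)) | \<sigma> \<tau>.
            inj_on \<sigma> {..<d} \<and> \<sigma> ` {..<d} \<subseteq> {..<d1^2} \<and>
            inj_on \<tau> {..<d} \<and> \<tau> ` {..<d} \<subseteq> {..<d2^2}})"

end

theory Submission
  imports Defs
begin

text \<open>
  The SIC-POVM axioms fix the Gram matrix of the effects: Tr(P_\<alpha> P_\<beta>) = b + (a - b) \<delta>_\<alpha>\<beta>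
  with b = (1 - n a) / (n (n^2 - 1)). For Hermitian A put c_\<alpha> = Tr(P_\<alpha> A) and M = \<Sum> c_\<alpha> P_\<alpha>;
  expanding Tr(X^2) \<ge> 0 for X = M - (a - b) A - n b Tr(A) I gives
  \<Sum> c_\<alpha>^2 \<le> (a - b) Tr(A^2) + n b Tr(A)^2, which for a state (Tr(A^2) \<le> 1) is at most
  (a n^2 + 1) / (n (n + 1)). For a product state A \<otimes> B each term of J factors as
  c_\<sigma>(j) d_\<tau>(j) \<le> (c_\<sigma>(j)^2 + d_\<tau>(j)^2) / 2, and the bound passes to convex combinations
  of product states.
\<close>

lemma sum_mult_if_eq:
  fixes c :: "'i \<Rightarrow> 'a::comm_ring_1"
  assumes "finite S" "j \<in> S"
  shows "(\<Sum>i\<in>S. c i * (if i = j then x else y)) = y * sum c S + (x - y) * c j"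
proof -
  have "(\<Sum>i\<in>S. c i * (if i = j then x else y)) = (\<Sum>i\<in>S. y * c i + (if i = j then (x - y) * c j else 0))"
    by (intro sum.cong) (auto simp: algebra_simps)
  also have "\<dots> = y * sum c S + (x - y) * c j"
    using assms by (simp add: sum.distrib sum_distrib_left)
  finally show ?thesis .
qed

lemma sum_reindex_inj_le:
  fixes f :: "'a \<Rightarrow> 'b::ordered_comm_monoid_add"
  assumes "inj_on \<sigma> S" "\<sigma> ` S \<subseteq> T" "finite T" "\<And>x. x \<in> T \<Longrightarrow> 0 \<le> f x"
  shows "(\<Sum>j\<in>S. f (\<sigma> j)) \<le> sum f T"
proof -
  have "(\<Sum>j\<in>S. f (\<sigma> j)) = sum f (\<sigma> ` S)"
    using sum.reindex[OF assms(1), of f] by simp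
  also have "\<dots> \<le> sum f T"
    using assms by (intro sum_mono2) auto
  finally show ?thesis .
qed

lemma nonneg_quadratic_imp_le:
  fixes p q w :: real
  assumes nonneg: "\<And>t. 0 \<le> p * t\<^sup>2 - 2 * t * w + q * w" and "0 \<le> p" "0 \<le> q" "0 \<le> w"
  shows "w \<le> p * q"
proof (cases "w = 0")
  case True
  then show ?thesis using assms by simp
next
  case False
  show ?thesis
  proof (cases "p = 0")
    case True
    have "0 \<le> p * ((q*w+1)/(2*w))\<^sup>2 - 2 * ((q*w+1)/(2*w)) * w + q * w" by (rule nonneg)
    also have "\<dots> = -1" using True False by (simp add: field_simps)
    finally show ?thesis by simp
  next
    case False
    then have p: "p > 0" using assms by simp
    have "0 \<le> p * (w/p)\<^sup>2 - 2 * (w/p) * w + q * w" by (rule nonneg)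
    also have "\<dots> = w * (p*q - w) / p" using p by (simp add: field_simps power2_eq_square)
    finally have "0 \<le> w * (p*q - w)" using p by (simp add: zero_le_divide_iff)
    then show ?thesis using \<open>w \<noteq> 0\<close> \<open>0 \<le> w\<close> by (simp add: zero_le_mult_iff)
  qed
qed

lemma real_square_minus_1_pos:
  assumes "n \<ge> 2"
  shows "real n ^ 2 - 1 > 0"
proof -
  have "(2::real) ^ 2 \<le> real n ^ 2" using assms by (intro power_mono) auto
  then show ?thesis by simp
qed

section \<open>Traces and Hermitian matrices\<close>

lemma of_real_vec_nth: "(of_real r :: 'a::real_algebra_1^'n) $ i = of_real r"
  by (simp add: of_real_def)

lemma mtrace_mult: "mtrace (X ** Y) = (\<Sum>i\<in>UNIV. \<Sum>k\<in>UNIV. X$i$k * Y$k$i)"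
  by (simp add: mtrace_def matrix_matrix_mult_def)

lemma mtrace_mult_commute: "mtrace (X ** Y) = mtrace (Y ** X)"
  unfolding mtrace_mult by (subst sum.swap) (simp add: mult.commute)

lemma mtrace_add_mult: "mtrace ((X + Y) ** Z) = mtrace (X ** Z) + mtrace (Y ** Z)"
  by (simp add: mtrace_mult algebra_simps sum.distrib)

lemma mtrace_diff_mult: "mtrace ((X - Y) ** Z) = mtrace (X ** Z) - mtrace (Y ** Z)"
  by (simp add: mtrace_mult algebra_simps sum_subtractf)

lemma mtrace_of_real_smult_mult: "mtrace ((of_real r *s X) ** Z) = of_real r * mtrace (X ** Z)"
  by (simp add: mtrace_mult sum_distrib_left mult.assoc of_real_vec_nth)

lemma mtrace_sum_mult: "mtrace (sum f S ** Z) = (\<Sum>i\<in>S. mtrace (f i ** Z))"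
  by (induct S rule: infinite_finite_induct) (simp_all add: mtrace_add_mult mtrace_def[of 0])

lemma mtrace_mult_diff: "mtrace (Z ** (X - Y)) = mtrace (Z ** X) - mtrace (Z ** Y)"
  by (simp add: mtrace_mult_commute[of Z] mtrace_diff_mult)

lemma mtrace_mult_of_real_smult: "mtrace (Z ** (of_real r *s X)) = of_real r * mtrace (Z ** X)"
  by (simp add: mtrace_mult_commute[of Z] mtrace_of_real_smult_mult)

lemma mtrace_mult_sum: "mtrace (Z ** sum f S) = (\<Sum>i\<in>S. mtrace (Z ** f i))"
  by (simp add: mtrace_mult_commute[of Z] mtrace_sum_mult)

lemma mtrace_mat_1: "mtrace (mat 1 :: complex^'n::finite^'n) = of_nat CARD('n)"
  by (simp add: mtrace_def mat_def)

lemma mtrace_square_diff_smult: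
  fixes M A :: "complex^'n::finite^'n"
  shows "mtrace ((M - of_real l *s A - of_real k *s mat 1) ** (M - of_real l *s A - of_real k *s mat 1))
    = mtrace (M ** M) - 2 * of_real l * mtrace (M ** A) - 2 * of_real k * mtrace M
      + of_real (l\<^sup>2) * mtrace (A ** A) + 2 * of_real (l * k) * mtrace A + of_real (k\<^sup>2 * CARD('n))"
  by (simp only: mtrace_diff_mult mtrace_mult_diff mtrace_of_real_smult_mult mtrace_mult_of_real_smult)
    (simp add: mtrace_mult_commute[of A M] mtrace_mat_1 algebra_simps power2_eq_square)

lemma mtrace_kron_mult: "mtrace (kron P Q ** kron A B) = mtrace (P ** A) * mtrace (Q ** B)"
proof -
  have pairs: "(\<Sum>c\<in>UNIV. f c) = (\<Sum>x\<in>UNIV. \<Sum>y\<in>UNIV. f (x, y))" for f :: "'a \<times> 'b \<Rightarrow> complex"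
    by (simp add: sum.cartesian_product)
  show ?thesis
    unfolding mtrace_mult sum_product pairs
    by (simp add: kron_def) (intro sum.cong refl, simp add: mult_ac)
qed

lemma adjoint_nth: "adjoint X $ i $ j = cnj (X $ j $ i)"
  by (simp add: adjoint_def)

lemma hermitian_iff: "hermitian X \<longleftrightarrow> (\<forall>i j. X$i$j = cnj (X$j$i))"
  unfolding hermitian_def vec_eq_iff adjoint_nth by (metis complex_cnj_cnj)

lemma hermitian_nth: "hermitian X \<Longrightarrow> X$i$j = cnj (X$j$i)"
  using hermitian_iff by blast

lemma hermitian_add: "hermitian X \<Longrightarrow> hermitian Y \<Longrightarrow> hermitian (X + Y)"
  by (simp add: hermitian_def vec_eq_iff adjoint_nth)

lemma hermitian_diff: "hermitian X \<Longrightarrow> hermitian Y \<Longrightarrow> hermitian (X - Y)"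
  by (simp add: hermitian_def vec_eq_iff adjoint_nth)

lemma hermitian_of_real_smult: "hermitian X \<Longrightarrow> hermitian (of_real c *s X)"
  by (simp add: hermitian_def vec_eq_iff adjoint_nth of_real_vec_nth)

lemma hermitian_zero: "hermitian (0 :: complex^'n^'n)"
  by (simp add: hermitian_def vec_eq_iff adjoint_nth)

lemma hermitian_sum: "(\<And>i. i \<in> S \<Longrightarrow> hermitian (f i)) \<Longrightarrow> hermitian (sum f S)"
  by (induct S rule: infinite_finite_induct) (simp_all add: hermitian_zero hermitian_add)

lemma hermitian_mat_1: "hermitian (mat 1 :: complex^'n^'n)"
  by (simp add: hermitian_def vec_eq_iff adjoint_nth mat_def)

lemma mtrace_mult_hermitian_real:
  assumes "hermitian X" "hermitian Y"
  shows "mtrace (X ** Y) = of_real (Re (mtrace (X ** Y)))"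
proof -
  have "cnj (mtrace (X ** Y)) = (\<Sum>i\<in>UNIV. \<Sum>k\<in>UNIV. cnj (X$i$k) * cnj (Y$k$i))"
    by (simp add: mtrace_mult)
  also have "\<dots> = (\<Sum>i\<in>UNIV. \<Sum>k\<in>UNIV. X$k$i * Y$i$k)"
    using hermitian_nth[OF assms(1)] hermitian_nth[OF assms(2)]
    by (intro sum.cong refl) (metis complex_cnj_cnj)
  also have "\<dots> = mtrace (X ** Y)"
    unfolding mtrace_mult by (subst sum.swap) (simp add: mult.commute)
  finally show ?thesis by (simp add: complex_eq_iff)
qed

lemma mtrace_mult_self_hermitian:
  assumes "hermitian X"
  shows "mtrace (X ** X) = of_real (\<Sum>i\<in>UNIV. \<Sum>k\<in>UNIV. (cmod (X$i$k))\<^sup>2)"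
proof -
  have "mtrace (X ** X) = (\<Sum>i\<in>UNIV. \<Sum>k\<in>UNIV. X$i$k * cnj (X$i$k))"
    unfolding mtrace_mult using hermitian_nth[OF assms] by (intro sum.cong refl) metis
  then show ?thesis by (simp add: complex_mult_cnj cmod_def)
qed

lemma mtrace_mult_self_hermitian_nonneg: "hermitian X \<Longrightarrow> 0 \<le> Re (mtrace (X ** X))"
  unfolding mtrace_mult_self_hermitian Re_complex_of_real by (intro sum_nonneg) simp

section \<open>Positive semidefinite matrices and states\<close>

lemma quadratic_form_two_point:
  fixes A :: "complex^'n::finite^'n" and i k :: 'n and x y :: complex
  defines "v \<equiv> (\<chi> l. (if l = i then x else 0) + (if l = k then y else 0))"
  shows "(\<Sum>l\<in>UNIV. cnj (v $ l) * (A *v v) $ l) =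
     cnj x * (A$i$i * x + A$i$k * y) + cnj y * (A$k$i * x + A$k$k * y)"
proof -
  have delta_left: "(\<Sum>l\<in>UNIV. (if l = j then c else 0) * f l) = c * f j"
    and delta_right: "(\<Sum>l\<in>UNIV. f l * (if l = j then c else 0)) = f j * c"
    for j :: 'n and c :: complex and f
    by (simp_all add: if_distrib[of "\<lambda>u. u * _"] if_distrib[of "\<lambda>u. _ * u"] cong: if_cong)
  have cnj_if: "cnj (if P then c else 0) = (if P then cnj c else 0)" for P c
    by simp
  have Av: "(A *v v) $ l = A$l$i * x + A$l$k * y" for l
    unfolding v_def matrix_vector_mult_def
    by (simp add: distrib_left sum.distrib delta_right)
  show ?thesis unfolding Av unfolding v_def
    by (simp add: distrib_right sum.distrib delta_left cnj_if)
qed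

lemma psd_quadratic_form_nonneg: "psd A \<Longrightarrow> 0 \<le> Re (\<Sum>l\<in>UNIV. cnj (v $ l) * (A *v v) $ l)"
  by (simp add: psd_def)

lemma psd_diag_nonneg: "psd A \<Longrightarrow> 0 \<le> Re (A$i$i)"
  using psd_quadratic_form_nonneg[of A "\<chi> l. (if l = i then 1 else 0) + (if l = i then 0 else 0)"]
  unfolding quadratic_form_two_point by simp

lemma psd_offdiag_le:
  assumes "psd A"
  shows "(cmod (A$i$k))\<^sup>2 \<le> Re (A$i$i) * Re (A$k$k)"
proof -
  define z where "z = A$i$k"
  have zk: "A$k$i = cnj z" using hermitian_nth[of A k i] assms z_def by (simp add: psd_def)
  have "0 \<le> Re (A$i$i) * t\<^sup>2 - 2 * t * (cmod z)\<^sup>2 + Re (A$k$k) * (cmod z)\<^sup>2" for t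
  proof -
    have "0 \<le> Re (cnj (of_real t) * (A$i$i * of_real t + A$i$k * (- cnj z))
                 + cnj (- cnj z) * (A$k$i * of_real t + A$k$k * (- cnj z)))"
      using psd_quadratic_form_nonneg[OF assms,
          of "\<chi> l. (if l = i then of_real t else 0) + (if l = k then - cnj z else 0)"]
      unfolding quadratic_form_two_point .
    also have "\<dots> = Re (A$i$i) * t\<^sup>2 - 2 * t * (cmod z)\<^sup>2 + Re (A$k$k) * (cmod z)\<^sup>2"
      unfolding zk z_def[symmetric]
      by (simp add: algebra_simps power2_eq_square complex_mult_cnj cmod_def)
    finally show ?thesis .
  qed
  then show ?thesis unfolding z_def[symmetric]
    by (rule nonneg_quadratic_imp_le) (auto intro: psd_diag_nonneg[OF assms])
qed

lemma density_mtrace_square_le_1: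
  assumes "density A"
  shows "Re (mtrace (A ** A)) \<le> 1"
proof -
  have psd: "psd A" and trace: "mtrace A = 1" using assms by (auto simp: density_def)
  have "Re (mtrace (A ** A)) = (\<Sum>i\<in>UNIV. \<Sum>k\<in>UNIV. (cmod (A$i$k))\<^sup>2)"
    using psd by (simp add: psd_def mtrace_mult_self_hermitian)
  also have "\<dots> \<le> (\<Sum>i\<in>UNIV. \<Sum>k\<in>UNIV. Re (A$i$i) * Re (A$k$k))"
    by (intro sum_mono psd_offdiag_le[OF psd])
  also have "\<dots> = (\<Sum>i\<in>UNIV. Re (A$i$i)) * (\<Sum>k\<in>UNIV. Re (A$k$k))"
    by (simp add: sum_product)
  also have "(\<Sum>i\<in>UNIV. Re (A$i$i)) = 1" using trace by (simp add: mtrace_def flip: Re_sum)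
  finally show ?thesis by simp
qed

section \<open>General SIC-POVMs\<close>

definition sic_overlap :: "nat \<Rightarrow> real \<Rightarrow> real" where
  "sic_overlap n a = (1 - real n * a) / (real n * (real n ^ 2 - 1))"

lemma general_sic_povm_card_ge_2:
  assumes "general_sic_povm (P :: nat \<Rightarrow> complex^'n::finite^'n) a"
  shows "CARD('n) \<ge> 2"
proof -
  have "CARD('n) \<noteq> 1" using assms by (auto simp: general_sic_povm_def)
  moreover have "CARD('n) > 0" by simp
  ultimately show ?thesis by linarith
qed

lemma general_sic_povmD:
  fixes P :: "nat \<Rightarrow> complex^'n::finite^'n"
  assumes "general_sic_povm P a"
  shows "1 / real CARD('n) ^ 3 < a"
    and "\<alpha> < CARD('n)\<^sup>2 \<Longrightarrow> psd (P \<alpha>)"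
    and "(\<Sum>\<alpha><CARD('n)\<^sup>2. P \<alpha>) = mat 1"
    and "\<alpha> < CARD('n)\<^sup>2 \<Longrightarrow> \<beta> < CARD('n)\<^sup>2 \<Longrightarrow>
           mtrace (P \<alpha> ** P \<beta>) = of_real (if \<alpha> = \<beta> then a else sic_overlap CARD('n) a)"
  using assms unfolding general_sic_povm_def sic_overlap_def Let_def
  by (simp_all split: if_split)

lemma sic_overlap_identity:
  assumes "n \<ge> 2"
  shows "a + (real n ^ 2 - 1) * sic_overlap n a = 1 / real n"
proof -
  have "(real n ^ 2 - 1) * sic_overlap n a = (1 - real n * a) / real n"
    using real_square_minus_1_pos[OF assms] by (simp add: sic_overlap_def)
  also have "a + \<dots> = 1 / real n"
    using assms by (simp add: field_simps)
  finally show ?thesis .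
qed

lemma sic_overlap_less:
  assumes "n \<ge> 2" and "1 / real n ^ 3 < a"
  shows "sic_overlap n a < a"
proof -
  have n: "real n > 0" "real n ^ 2 - 1 > 0"
    using assms(1) real_square_minus_1_pos by auto
  have "1 < a * real n ^ 3" using assms(2) n(1) by (simp add: divide_less_eq mult.commute)
  then have "1 - real n * a < a * (real n * (real n ^ 2 - 1))"
    by (simp add: algebra_simps power2_eq_square power3_eq_cube)
  then show ?thesis using n by (simp add: sic_overlap_def divide_less_eq)
qed

lemma sic_mtrace:
  fixes P :: "nat \<Rightarrow> complex^'n::finite^'n"
  assumes sic: "general_sic_povm P a" and "\<alpha> < CARD('n)\<^sup>2"
  shows "mtrace (P \<alpha>) = of_real (1 / real CARD('n))"
proof -
  have "mtrace (P \<alpha>) = mtrace (P \<alpha> ** (\<Sum>\<beta><CARD('n)\<^sup>2. P \<beta>))"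
    by (simp add: general_sic_povmD(3)[OF sic])
  also have "\<dots> = of_real (\<Sum>\<beta><CARD('n)\<^sup>2. 1 * (if \<beta> = \<alpha> then a else sic_overlap CARD('n) a))"
    using assms by (simp add: mtrace_mult_sum general_sic_povmD(4) eq_commute[of \<alpha>] flip: of_real_sum)
  also have "\<dots> = of_real (a + (real CARD('n) ^ 2 - 1) * sic_overlap CARD('n) a)"
    using assms(2) by (subst sum_mult_if_eq) (simp_all add: algebra_simps)
  also have "\<dots> = of_real (1 / real CARD('n))"
    using sic_overlap_identity[OF general_sic_povm_card_ge_2[OF sic]] by simp
  finally show ?thesis .
qed

lemma sic_combination_mtrace:
  fixes P :: "nat \<Rightarrow> complex^'n::finite^'n" and c :: "nat \<Rightarrow> real"
  assumes sic: "general_sic_povm P a"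
  defines "b \<equiv> sic_overlap CARD('n) a"
    and "M \<equiv> (\<Sum>\<alpha><CARD('n)\<^sup>2. of_real (c \<alpha>) *s P \<alpha>)"
  shows "mtrace M = of_real (sum c {..<CARD('n)\<^sup>2} / real CARD('n))"
    and "\<beta> < CARD('n)\<^sup>2 \<Longrightarrow> mtrace (P \<beta> ** M) = of_real (b * sum c {..<CARD('n)\<^sup>2} + (a - b) * c \<beta>)"
    and "mtrace (M ** M) = of_real (b * (sum c {..<CARD('n)\<^sup>2})\<^sup>2 + (a - b) * (\<Sum>\<alpha><CARD('n)\<^sup>2. (c \<alpha>)\<^sup>2))"
proof -
  have "mtrace M = mtrace (M ** mat 1)" by simp
  also have "\<dots> = (\<Sum>\<alpha><CARD('n)\<^sup>2. of_real (c \<alpha>) * mtrace (P \<alpha> ** mat 1))"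
    by (simp only: M_def mtrace_sum_mult mtrace_of_real_smult_mult)
  also have "\<dots> = (\<Sum>\<alpha><CARD('n)\<^sup>2. of_real (c \<alpha> * (1 / real CARD('n))))"
    by (simp add: sic_mtrace[OF sic])
  finally show "mtrace M = of_real (sum c {..<CARD('n)\<^sup>2} / real CARD('n))"
    by (simp add: sum_divide_distrib of_real_sum)
next
  have PM: "mtrace (P \<beta> ** M) = of_real (b * sum c {..<CARD('n)\<^sup>2} + (a - b) * c \<beta>)" if "\<beta> < CARD('n)\<^sup>2" for \<beta>
  proof -
    have "mtrace (P \<beta> ** M) = of_real (\<Sum>\<alpha><CARD('n)\<^sup>2. c \<alpha> * (if \<alpha> = \<beta> then a else b))"
      using that unfolding M_def b_def
      by (simp add: mtrace_mult_sum mtrace_mult_of_real_smult general_sic_povmD(4)[OF sic]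
          eq_commute[of \<beta>] flip: of_real_sum of_real_mult)
    then show ?thesis using that by (simp add: sum_mult_if_eq)
  qed
  then show "\<beta> < CARD('n)\<^sup>2 \<Longrightarrow> mtrace (P \<beta> ** M) = of_real (b * sum c {..<CARD('n)\<^sup>2} + (a - b) * c \<beta>)" .
  have "mtrace (M ** M) = (\<Sum>\<alpha><CARD('n)\<^sup>2. of_real (c \<alpha>) * mtrace (P \<alpha> ** M))"
    by (subst (1) M_def) (simp only: mtrace_sum_mult mtrace_of_real_smult_mult)
  also have "\<dots> = of_real (\<Sum>\<alpha><CARD('n)\<^sup>2. c \<alpha> * (b * sum c {..<CARD('n)\<^sup>2} + (a - b) * c \<alpha>))"
    by (simp add: PM of_real_sum)
  also have "(\<Sum>\<alpha><CARD('n)\<^sup>2. c \<alpha> * (b * sum c {..<CARD('n)\<^sup>2} + (a - b) * c \<alpha>))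
      = b * (sum c {..<CARD('n)\<^sup>2})\<^sup>2 + (a - b) * (\<Sum>\<alpha><CARD('n)\<^sup>2. (c \<alpha>)\<^sup>2)"
    by (simp add: distrib_left sum.distrib sum_distrib_left power2_eq_square mult_ac
        flip: sum_distrib_right)
  finally show "mtrace (M ** M) = of_real (b * (sum c {..<CARD('n)\<^sup>2})\<^sup>2 + (a - b) * (\<Sum>\<alpha><CARD('n)\<^sup>2. (c \<alpha>)\<^sup>2))" .
qed

lemma sic_sum_mtrace_mult:
  fixes P :: "nat \<Rightarrow> complex^'n::finite^'n"
  assumes "general_sic_povm P a"
  shows "(\<Sum>\<alpha><CARD('n)\<^sup>2. mtrace (P \<alpha> ** A)) = mtrace A"
  by (simp add: general_sic_povmD(3)[OF assms] flip: mtrace_sum_mult)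

lemma sic_coefficients_square_sum_le:
  fixes P :: "nat \<Rightarrow> complex^'n::finite^'n"
  assumes sic: "general_sic_povm P a" and herm: "hermitian A"
  defines "n \<equiv> real CARD('n)" and "b \<equiv> sic_overlap CARD('n) a"
  shows "(\<Sum>\<alpha><CARD('n)\<^sup>2. (Re (mtrace (P \<alpha> ** A)))\<^sup>2)
           \<le> (a - b) * Re (mtrace (A ** A)) + n * b * (Re (mtrace A))\<^sup>2"
proof -
  define c where "c \<alpha> = Re (mtrace (P \<alpha> ** A))" for \<alpha>
  define S where "S = (\<Sum>\<alpha><CARD('n)\<^sup>2. (c \<alpha>)\<^sup>2)"
  define r where "r = Re (mtrace (A ** A))"
  define t where "t = Re (mtrace A)"
  define l where "l = a - b"
  define M where "M = (\<Sum>\<alpha><CARD('n)\<^sup>2. of_real (c \<alpha>) *s P \<alpha>)"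
  define X where "X = M - of_real l *s A - of_real (n * b * t) *s mat 1"
  have n2: "CARD('n) \<ge> 2" by (rule general_sic_povm_card_ge_2[OF sic])
  have hP: "hermitian (P \<alpha>)" if "\<alpha> < CARD('n)\<^sup>2" for \<alpha>
    using general_sic_povmD(2)[OF sic that] by (simp add: psd_def)
  have PA: "mtrace (P \<alpha> ** A) = of_real (c \<alpha>)" if "\<alpha> < CARD('n)\<^sup>2" for \<alpha>
    unfolding c_def by (rule mtrace_mult_hermitian_real[OF hP[OF that] herm])
  have AA: "mtrace (A ** A) = of_real r"
    unfolding r_def by (rule mtrace_mult_hermitian_real[OF herm herm])
  have trA: "mtrace A = of_real t"
    using mtrace_mult_hermitian_real[OF hermitian_mat_1 herm] by (simp add: t_def)
  have "sum c {..<CARD('n)\<^sup>2} = t"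
    unfolding c_def t_def by (simp add: sic_sum_mtrace_mult[OF sic] flip: Re_sum)
  note M = sic_combination_mtrace[OF sic, where c = c, folded M_def b_def n_def, unfolded this, folded S_def]
  have MA: "mtrace (M ** A) = of_real S"
    by (simp add: M_def S_def mtrace_sum_mult mtrace_of_real_smult_mult PA power2_eq_square of_real_sum)
  have n: "n > 0" "n * l + n ^ 3 * b = 1"
    using n2 sic_overlap_identity[OF n2, of a]
    by (simp_all add: n_def l_def b_def field_simps power2_eq_square power3_eq_cube)
  have "mtrace (X ** X) = of_real (b * t\<^sup>2 + l * S - 2 * l * S - 2 * n * b * t * (t / n)
                                   + l\<^sup>2 * r + 2 * l * n * b * t * t + (n * b * t)\<^sup>2 * n)"
    unfolding X_def mtrace_square_diff_smult by (simp add: M MA AA trA l_def n_def algebra_simps)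
  also have "b * t\<^sup>2 + l * S - 2 * l * S - 2 * n * b * t * (t / n)
               + l\<^sup>2 * r + 2 * l * n * b * t * t + (n * b * t)\<^sup>2 * n
           = l * (l * r + n * b * t\<^sup>2 - S) + b * t\<^sup>2 * (n * l + n ^ 3 * b - 1)"
    using n(1) by (simp add: field_simps power2_eq_square power3_eq_cube)
  finally have "mtrace (X ** X) = of_real (l * (l * r + n * b * t\<^sup>2 - S))"
    using n(2) by simp
  moreover have "hermitian X"
    unfolding X_def M_def
    by (intro hermitian_diff hermitian_of_real_smult hermitian_sum hP herm hermitian_mat_1) simp
  ultimately have "0 \<le> l * (l * r + n * b * t\<^sup>2 - S)"
    using mtrace_mult_self_hermitian_nonneg by (metis Re_complex_of_real)
  moreover have "l > 0"
    using sic_overlap_less[OF n2 general_sic_povmD(1)[OF sic]] by (simp add: l_def b_def)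
  ultimately show ?thesis
    by (simp add: zero_le_mult_iff S_def c_def l_def r_def t_def)
qed

definition sic_square_sum_bound :: "nat \<Rightarrow> real \<Rightarrow> real" where
  "sic_square_sum_bound n a = (a * real n ^ 2 + 1) / (real n * (real n + 1))"

lemma sic_probabilities_square_sum_le:
  fixes P :: "nat \<Rightarrow> complex^'n::finite^'n"
  assumes sic: "general_sic_povm P a" and dens: "density A"
  shows "(\<Sum>\<alpha><CARD('n)\<^sup>2. (Re (mtrace (P \<alpha> ** A)))\<^sup>2) \<le> sic_square_sum_bound CARD('n) a"
proof -
  define n where "n = real CARD('n)"
  define b where "b = sic_overlap CARD('n) a"
  have n2: "CARD('n) \<ge> 2" by (rule general_sic_povm_card_ge_2[OF sic])
  have "b < a" unfolding b_def by (rule sic_overlap_less[OF n2 general_sic_povmD(1)[OF sic]])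
  have "(\<Sum>\<alpha><CARD('n)\<^sup>2. (Re (mtrace (P \<alpha> ** A)))\<^sup>2)
         \<le> (a - b) * Re (mtrace (A ** A)) + n * b * (Re (mtrace A))\<^sup>2"
    using dens unfolding n_def b_def density_def psd_def
    by (intro sic_coefficients_square_sum_le[OF sic]) simp
  also have "\<dots> \<le> (a - b) + n * b"
    using density_mtrace_square_le_1[OF dens] dens \<open>b < a\<close> by (simp add: density_def)
  also have "\<dots> = (a * n\<^sup>2 + 1) / (n * (n + 1))"
  proof -
    have n: "n > 0" using n2 by (simp add: n_def)
    have "n * (n\<^sup>2 - 1) * b = 1 - n * a"
      using sic_overlap_identity[OF n2, of a] n by (simp add: n_def b_def field_simps)
    then have "(a - b + n * b) * (n * (n + 1)) = a * n\<^sup>2 + 1"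
      by (simp add: algebra_simps power2_eq_square power3_eq_cube)
    moreover have "n * (n + 1) \<noteq> 0" using n by simp
    ultimately show ?thesis by (simp add: nonzero_eq_divide_eq)
  qed
  finally show ?thesis by (simp add: sic_square_sum_bound_def n_def)
qed

section \<open>Separable states\<close>

lemma product_state_sic_correlation_le:
  fixes P :: "nat \<Rightarrow> complex^'a::finite^'a" and Q :: "nat \<Rightarrow> complex^'b::finite^'b"
  assumes sics: "general_sic_povm P a1" "general_sic_povm Q a2"
    and dens: "density A" "density B"
    and \<sigma>: "inj_on \<sigma> {..<d}" "\<sigma> ` {..<d} \<subseteq> {..<CARD('a)\<^sup>2}"
    and \<tau>: "inj_on \<tau> {..<d}" "\<tau> ` {..<d} \<subseteq> {..<CARD('b)\<^sup>2}"
  shows "Re (\<Sum>j<d. mtrace (kron (P (\<sigma> j)) (Q (\<tau> j)) ** kron A B))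
           \<le> 1/2 * (sic_square_sum_bound CARD('a) a1 + sic_square_sum_bound CARD('b) a2)"
proof -
  define x where "x \<alpha> = Re (mtrace (P \<alpha> ** A))" for \<alpha>
  define y where "y \<beta> = Re (mtrace (Q \<beta> ** B))" for \<beta>
  have herm: "hermitian A" "hermitian B" using dens by (auto simp: density_def psd_def)
  have "mtrace (kron (P (\<sigma> j)) (Q (\<tau> j)) ** kron A B) = of_real (x (\<sigma> j) * y (\<tau> j))"
    if "j < d" for j
  proof -
    have hP: "hermitian (P (\<sigma> j))" and hQ: "hermitian (Q (\<tau> j))"
      using that \<sigma> \<tau> general_sic_povmD(2)[OF sics(1)] general_sic_povmD(2)[OF sics(2)]
      by (auto simp: psd_def)
    have "mtrace (P (\<sigma> j) ** A) = of_real (x (\<sigma> j))"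
      unfolding x_def using hP herm(1) by (rule mtrace_mult_hermitian_real)
    moreover have "mtrace (Q (\<tau> j) ** B) = of_real (y (\<tau> j))"
      unfolding y_def using hQ herm(2) by (rule mtrace_mult_hermitian_real)
    ultimately show ?thesis by (simp add: mtrace_kron_mult)
  qed
  then have "Re (\<Sum>j<d. mtrace (kron (P (\<sigma> j)) (Q (\<tau> j)) ** kron A B))
               = (\<Sum>j<d. x (\<sigma> j) * y (\<tau> j))"
    by (simp add: Re_sum)
  also have "\<dots> \<le> (\<Sum>j<d. 1/2 * ((x (\<sigma> j))\<^sup>2 + (y (\<tau> j))\<^sup>2))"
  proof (rule sum_mono)
    fix j
    show "x (\<sigma> j) * y (\<tau> j) \<le> 1/2 * ((x (\<sigma> j))\<^sup>2 + (y (\<tau> j))\<^sup>2)"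
      using sum_squares_bound[of "x (\<sigma> j)" "y (\<tau> j)"] by (simp add: field_simps)
  qed
  also have "\<dots> = 1/2 * ((\<Sum>j<d. (x (\<sigma> j))\<^sup>2) + (\<Sum>j<d. (y (\<tau> j))\<^sup>2))"
    by (simp only: sum.distrib flip: sum_distrib_left)
  also have "\<dots> \<le> 1/2 * ((\<Sum>\<alpha><CARD('a)\<^sup>2. (x \<alpha>)\<^sup>2) + (\<Sum>\<beta><CARD('b)\<^sup>2. (y \<beta>)\<^sup>2))"
    using sum_reindex_inj_le[OF \<sigma>, of "\<lambda>\<alpha>. (x \<alpha>)\<^sup>2"] sum_reindex_inj_le[OF \<tau>, of "\<lambda>\<beta>. (y \<beta>)\<^sup>2"]
    by simp
  also have "\<dots> \<le> 1/2 * (sic_square_sum_bound CARD('a) a1 + sic_square_sum_bound CARD('b) a2)"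
    using sic_probabilities_square_sum_le[OF sics(1) dens(1)] sic_probabilities_square_sum_le[OF sics(2) dens(2)]
    by (simp add: x_def y_def)
  finally show ?thesis .
qed

lemma separable_sic_correlation_le:
  fixes P :: "nat \<Rightarrow> complex^'a::finite^'a" and Q :: "nat \<Rightarrow> complex^'b::finite^'b"
  assumes "separable \<rho>" and sics: "general_sic_povm P a1" "general_sic_povm Q a2"
    and \<sigma>: "inj_on \<sigma> {..<d}" "\<sigma> ` {..<d} \<subseteq> {..<CARD('a)\<^sup>2}"
    and \<tau>: "inj_on \<tau> {..<d}" "\<tau> ` {..<d} \<subseteq> {..<CARD('b)\<^sup>2}"
  shows "Re (\<Sum>j<d. mtrace (kron (P (\<sigma> j)) (Q (\<tau> j)) ** \<rho>))
           \<le> 1/2 * (sic_square_sum_bound CARD('a) a1 + sic_square_sum_bound CARD('b) a2)"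
proof -
  define K where "K = 1/2 * (sic_square_sum_bound CARD('a) a1 + sic_square_sum_bound CARD('b) a2)"
  define E where "E j = kron (P (\<sigma> j)) (Q (\<tau> j))" for j
  obtain m p and A :: "nat \<Rightarrow> complex^'a^'a" and B :: "nat \<Rightarrow> complex^'b^'b"
    where states: "\<And>i. i < m \<Longrightarrow> 0 \<le> p i \<and> density (A i) \<and> density (B i)"
      and weights: "(\<Sum>i<m. p i) = 1"
      and \<rho>: "\<rho> = (\<Sum>i<m. of_real (p i) *s kron (A i) (B i))"
    using \<open>separable \<rho>\<close> unfolding separable_def by (elim exE conjE) (rule that, auto)
  have "Re (\<Sum>j<d. mtrace (E j ** \<rho>)) = (\<Sum>i<m. p i * Re (\<Sum>j<d. mtrace (E j ** kron (A i) (B i))))"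
    unfolding \<rho> mtrace_mult_sum mtrace_mult_of_real_smult
    by (subst sum.swap) (simp add: Re_sum sum_distrib_left)
  also have "\<dots> \<le> (\<Sum>i<m. p i * K)"
    using states unfolding E_def K_def
    by (intro sum_mono mult_left_mono product_state_sic_correlation_le[OF sics _ _ \<sigma> \<tau>]) auto
  also have "\<dots> = K" using weights by (simp flip: sum_distrib_right)
  finally show ?thesis by (simp add: E_def K_def)
qed

lemma J_val_le:
  fixes P :: "nat \<Rightarrow> complex^'a::finite^'a" and Q :: "nat \<Rightarrow> complex^'b::finite^'b"
  defines "d \<equiv> min (CARD('a)\<^sup>2) (CARD('b)\<^sup>2)"
  assumes "\<And>\<sigma> \<tau>. inj_on \<sigma> {..<d} \<Longrightarrow> \<sigma> ` {..<d} \<subseteq> {..<CARD('a)\<^sup>2} \<Longrightarrow>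
      inj_on \<tau> {..<d} \<Longrightarrow> \<tau> ` {..<d} \<subseteq> {..<CARD('b)\<^sup>2} \<Longrightarrow>
      Re (\<Sum>j<d. mtrace (kron (P (\<sigma> j)) (Q (\<tau> j)) ** \<rho>)) \<le> K"
  shows "J_val P Q \<rho> \<le> K"
proof -
  define val where "val \<sigma> \<tau> = Re (\<Sum>j<d. mtrace (kron (P (\<sigma> j)) (Q (\<tau> j)) ** \<rho>))"
    for \<sigma> \<tau> :: "nat \<Rightarrow> nat"
  define adm where "adm \<sigma> \<tau> \<longleftrightarrow> inj_on \<sigma> {..<d} \<and> \<sigma> ` {..<d} \<subseteq> {..<CARD('a)\<^sup>2} \<and>
      inj_on \<tau> {..<d} \<and> \<tau> ` {..<d} \<subseteq> {..<CARD('b)\<^sup>2}" for \<sigma> \<tau> :: "nat \<Rightarrow> nat"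
  define V where "V = {val \<sigma> \<tau> | \<sigma> \<tau>. adm \<sigma> \<tau>}"
  have J: "J_val P Q \<rho> = Max V"
    unfolding J_val_def Let_def V_def val_def adm_def d_def ..
  have "V \<subseteq> (\<lambda>(\<sigma>, \<tau>). val \<sigma> \<tau>) ` (({..<d} \<rightarrow>\<^sub>E {..<CARD('a)\<^sup>2}) \<times> ({..<d} \<rightarrow>\<^sub>E {..<CARD('b)\<^sup>2}))"
  proof
    fix v assume "v \<in> V"
    then obtain \<sigma> \<tau> where v: "v = val \<sigma> \<tau>" and "adm \<sigma> \<tau>" by (auto simp: V_def)
    then have "(restrict \<sigma> {..<d}, restrict \<tau> {..<d})
        \<in> ({..<d} \<rightarrow>\<^sub>E {..<CARD('a)\<^sup>2}) \<times> ({..<d} \<rightarrow>\<^sub>E {..<CARD('b)\<^sup>2})"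
      by (auto simp: adm_def)
    moreover have "v = val (restrict \<sigma> {..<d}) (restrict \<tau> {..<d})"
      unfolding v val_def by (intro arg_cong[where f = Re] sum.cong) auto
    ultimately show "v \<in> (\<lambda>(\<sigma>, \<tau>). val \<sigma> \<tau>) ` (({..<d} \<rightarrow>\<^sub>E {..<CARD('a)\<^sup>2}) \<times> ({..<d} \<rightarrow>\<^sub>E {..<CARD('b)\<^sup>2}))"
      by (intro image_eqI[where x = "(restrict \<sigma> {..<d}, restrict \<tau> {..<d})"]) simp_all
  qed
  then have "finite V" by (rule finite_subset) (intro finite_imageI finite_cartesian_product finite_PiE; simp)
  moreover have "V \<noteq> {}"
  proof -
    have "adm id id" unfolding adm_def d_def by auto
    then show ?thesis unfolding V_def by blast
  qed
  moreover have "v \<le> K" if "v \<in> V" for v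
    using that assms(2) unfolding V_def adm_def val_def by blast
  ultimately show ?thesis
    unfolding J by (rule Max.boundedI)
qed

theorem theorem1:
  fixes \<rho> :: "complex^('a::finite \<times> 'b::finite)^('a \<times> 'b)"
    and P :: "nat \<Rightarrow> complex^'a^'a" and Q :: "nat \<Rightarrow> complex^'b^'b"
    and a1 a2 :: real
  assumes "CARD('a) \<ge> 2" and "CARD('b) \<ge> 2"
    and "density \<rho>"
    and "general_sic_povm P a1" and "general_sic_povm Q a2"
    and "separable \<rho>"
  shows "J_val P Q \<rho> \<le>
    1/2 * ((a1 * real CARD('a)^2 + 1) / (real CARD('a) * (real CARD('a) + 1))
         + (a2 * real CARD('b)^2 + 1) / (real CARD('b) * (real CARD('b) + 1)))"
  \<comment> \<open>The dimension and density hypotheses are implied by the others: there is no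
      general SIC-POVM on \<open>\<complex>\<^sup>1\<close>, and separable matrices are states.\<close>
proof -
  have "J_val P Q \<rho> \<le> 1/2 * (sic_square_sum_bound CARD('a) a1 + sic_square_sum_bound CARD('b) a2)"
    by (rule J_val_le) (rule separable_sic_correlation_le[OF assms(6) assms(4) assms(5)])
  then show ?thesis by (simp add: sic_square_sum_bound_def)
qed

end
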